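(* Let $d\neq 1$ be a squarefree integer, let $K=\mathbb{Q}(\sqrt{d})$ with ring of integers $\mathcal{O}_K$, and let $D$ denote the discriminant of $K$. Assume that $K$ has class number $1$. Then for an arbitrary nonzero rational number $r$ the following statements are equivalent: (i) there exists a unit $\epsilon\in\mathcal{O}_K$ such that $\epsilon r\in K^2$; (ii) for each rational prime $p$, if $v_p(r)$ is odd then $p\mid D$; (iii) there exists a divisor $d'$ of $D$ in $\mathbb{Z}$ such that $d' r\in\mathbb{Q}^2$.
   Context: For a rational prime $p$, $v_p$ denotes the $p$-adic valuation on $\mathbb{Q}$. $K^2$ and $\mathbb{Q}^2$ denote the sets of squares in $K$ and $\mathbb{Q}$. *)

theory Defs
  imports "HOL-Computational_Algebra.Computational_Algebra"
begin

definition quad_field :: "int \<Rightarrow> complex set" where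
  "quad_field d = {of_rat a + of_rat b * csqrt (of_int d) | a b. True}"

definition quad_ints :: "int \<Rightarrow> complex set" where
  "quad_ints d = {x \<in> quad_field d. algebraic_int x}"

definition quad_unit :: "int \<Rightarrow> complex \<Rightarrow> bool" where
  "quad_unit d e \<longleftrightarrow> e \<in> quad_ints d \<and> (\<exists>u \<in> quad_ints d. e * u = 1)"

definition quad_ideal :: "int \<Rightarrow> complex set \<Rightarrow> bool" where
  "quad_ideal d I \<longleftrightarrow> I \<subseteq> quad_ints d \<and> 0 \<in> I \<and>
     (\<forall>x\<in>I. \<forall>y\<in>I. x + y \<in> I) \<and> (\<forall>x\<in>I. \<forall>a\<in>quad_ints d. a * x \<in> I)"

definition class_number_one :: "int \<Rightarrow> bool" where
  "class_number_one d \<longleftrightarrow>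
     (\<forall>I. quad_ideal d I \<longrightarrow> (\<exists>a\<in>quad_ints d. I = {a * x | x. x \<in> quad_ints d}))"

definition quad_disc :: "int \<Rightarrow> int" where
  "quad_disc d = (if d mod 4 = 1 then d else 4 * d)"

text \<open>p-adic valuation on Q (value for r = 0 irrelevant).\<close>
definition padic_val_rat :: "int \<Rightarrow> rat \<Rightarrow> int" where
  "padic_val_rat p r = (case quotient_of r of (a, b) \<Rightarrow>
      int (multiplicity p a) - int (multiplicity p b))"

end

theory Submission
  imports Defs "Berlekamp_Zassenhaus.Factor_Bound"
begin

text \<open>
  (i) implies (ii): suppose \<open>\<epsilon> r = y\<^sup>2\<close> and \<open>v\<^sub>p(r)\<close> is odd for a prime \<open>p\<close> not dividing \<open>D\<close>.
  Rescaling by a rational square gives \<open>w\<^sup>2 = \<epsilon> p m\<close> with \<open>w\<close> integral and \<open>p\<close> not dividing \<open>m\<close>.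
  Taking norms, \<open>N(w) = \<plusminus>p m\<close>; comparing rational parts, \<open>p\<close> also divides the trace of \<open>w\<^sup>2\<close>.
  As \<open>p\<close> is unramified, this forces \<open>p\<^sup>2\<close> to divide \<open>N(w)\<close> (for \<open>p = 2\<close>, where \<open>d \<equiv> 1 mod 4\<close>,
  a computation modulo 16 takes its place), a contradiction.

  (iii) implies (i): every prime \<open>p\<close> dividing \<open>D\<close> ramifies, \<open>(p, g)\<^sup>2 = (p)\<close> with \<open>g = \<surd>d\<close>, or
  \<open>g = 1 + \<surd>d\<close> if \<open>p = 2\<close> and \<open>d \<equiv> 3 mod 4\<close>. By class number one \<open>(p, g) = (\<pi>)\<close>, so \<open>p\<close> is a
  unit times \<open>\<pi>\<^sup>2\<close>. Multiplying over the prime factors of \<open>d'\<close> (and using the unit \<open>-1\<close>),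
  \<open>d'\<close>, and hence \<open>r = d' (q/d')\<^sup>2\<close>, is a unit times a square.

  (ii) and (iii) are equivalent by elementary means: \<open>r\<close> is a rational square times \<open>a b\<close>,
  where \<open>a/b\<close> is \<open>r\<close> in lowest terms, and \<open>d'\<close> can be taken as the squarefree part of \<open>a b\<close>.

  Integrality is handled in coordinates: the integers of \<open>K\<close> are the \<open>(A + B \<surd>d)/2\<close> with
  \<open>A\<^sup>2 \<equiv> d B\<^sup>2 mod 4\<close>; the nontrivial inclusion is Gauss's lemma for the minimal polynomial.
\<close>

section \<open>Rational squares and the irrationality of \<open>\<surd>d\<close>\<close>

lemma csqrt_mult_self [simp]: "csqrt z * csqrt z = z"
  by (metis power2_csqrt power2_eq_square)

lemma squarefree_mult_square_in_Ints:
  fixes d k :: int and q :: rat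
  assumes "squarefree d" and "of_int d * q^2 = of_int k"
  shows "q \<in> \<int>"
proof -
  obtain u v where uv: "quotient_of q = (u, v)" by fastforce
  have v0: "v > 0" and q: "q = of_int u / of_int v" and "coprime u v"
    using quotient_of_denom_pos[OF uv] quotient_of_div[OF uv] quotient_of_coprime[OF uv] by auto
  have "of_int (d * u^2) = (of_int (k * v^2) :: rat)"
    using assms(2) v0 unfolding q by (simp add: field_simps)
  hence "v^2 dvd d * u^2" by (metis dvd_triv_right of_int_eq_iff)
  moreover have "algebraic_semidom_class.coprime (v^2) (u^2)"
    using \<open>coprime u v\<close> by (simp add: ac_simps)
  ultimately have "v^2 dvd d" using coprime_dvd_mult_left_iff by blast
  hence "is_unit v" using assms(1) squarefreeD by blast
  hence "v = 1" using v0 by simp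
  thus ?thesis using q by simp
qed

lemma of_rat_lincomb_eq_iff:
  fixes x :: "'a::field_char_0"
  assumes "x \<notin> \<rat>"
  shows "of_rat a + of_rat b * x = of_rat a' + of_rat b' * x \<longleftrightarrow> a = a' \<and> b = b'"
proof
  assume eq: "of_rat a + of_rat b * x = of_rat a' + of_rat b' * x"
  have "b = b'"
  proof (rule ccontr)
    assume "b \<noteq> b'"
    hence "x = of_rat ((a' - a) / (b - b'))"
      using eq by (simp add: of_rat_divide of_rat_diff field_simps)
    thus False using assms by simp
  qed
  thus "a = a' \<and> b = b'" using eq by simp
qed simp

locale squarefree_radicand =
  fixes d :: int
  assumes squarefree: "squarefree d" and not_one: "d \<noteq> 1"
begin

lemma csqrt_notin_Rats: "csqrt (of_int d) \<notin> \<rat>"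
proof
  assume "csqrt (of_int d) \<in> \<rat>"
  then obtain q where q: "csqrt (of_int d) = of_rat q" by (auto elim: Rats_cases)
  have "of_rat (q^2) = (of_rat (of_int d) :: complex)"
    by (metis q of_rat_of_int_eq of_rat_power power2_csqrt)
  hence qd: "q^2 = of_int d" by (simp only: of_rat_eq_iff)
  hence "of_int d * q^2 = of_int (d * d)" by simp
  then obtain u where "q = of_int u" using squarefree_mult_square_in_Ints[OF squarefree] Ints_cases by metis
  hence "d = u^2" using qd by (metis of_int_eq_iff of_int_power)
  hence "is_unit u" using squarefree by (simp add: squarefree_power_iff)
  hence "\<bar>u\<bar> = 1" by simp
  hence "d = 1" using \<open>d = u^2\<close> by (metis power2_abs power_one)
  with not_one show False by simp
qed

end

section \<open>Integers of \<open>\<rat>(\<surd>d)\<close> in coordinates\<close>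

interpretation of_rat_poly_hom: map_poly_comm_ring_hom "of_rat :: rat \<Rightarrow> 'a::field_char_0" ..

lemma monic_factor_of_monic_int_poly_integral:
  fixes P :: "int poly" and g h :: "rat poly"
  assumes "of_int_poly P = g * h" and "lead_coeff P = 1" and "lead_coeff g = 1"
  shows "Polynomial.coeff g i \<in> \<int>"
proof -
  obtain r G where rG: "rat_to_normalized_int_poly g = (r, G)" by fastforce
  have g: "g = Polynomial.smult r (of_int_poly G)" and "r > 0"
    using rat_to_normalized_int_poly[OF rG] by auto
  obtain H where "P = G * Polynomial.smult (content P) H"
    using rat_to_int_factor_explicit[OF assms(1) rG] by blast
  hence "lead_coeff G * lead_coeff (Polynomial.smult (content P) H) = 1"
    using assms(2) lead_coeff_mult by metis
  hence "lead_coeff G = 1 \<or> lead_coeff G = -1" using zmult_eq_1_iff by blast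
  moreover have "r * of_int (lead_coeff G) = 1"
    using assms(3) \<open>r > 0\<close> unfolding g by simp
  ultimately have "r = 1" using \<open>r > 0\<close> by auto
  thus ?thesis using g by simp
qed

lemma quadratic_dvd_of_irrational_root:
  fixes Q :: "rat poly" and x :: "'a::field_char_0"
  assumes "x \<notin> \<rat>" and "x^2 = of_rat t * x - of_rat n" and "poly (map_poly of_rat Q) x = 0"
  shows "[:n, -t, 1:] dvd Q"
proof -
  define g where "g = [:n, -t, 1:]"
  define R where "R = Q mod g"
  have "degree R \<le> 1"
  proof (cases "R = 0")
    case False
    thus ?thesis using degree_mod_less[of g Q] unfolding R_def g_def by simp
  qed simp
  hence R: "R = [:Polynomial.coeff R 0, Polynomial.coeff R 1:]"
    by (intro poly_eqI) (auto simp: coeff_pCons coeff_eq_0 split: nat.split)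
  have "poly (map_poly of_rat g) x = 0"
    using assms(2) unfolding g_def by (simp add: of_rat_minus algebra_simps power2_eq_square)
  moreover have "map_poly of_rat Q =
      map_poly of_rat g * map_poly of_rat (Q div g) + (map_poly of_rat R :: 'a poly)"
    unfolding R_def of_rat_poly_hom.hom_mult[symmetric] of_rat_poly_hom.hom_add[symmetric] by simp
  ultimately have "poly (map_poly of_rat R) x = 0" using assms(3) by simp
  hence "of_rat (Polynomial.coeff R 0) + of_rat (Polynomial.coeff R 1) * x = of_rat 0 + of_rat 0 * x"
    by (subst (asm) R) (simp add: Polynomial.map_poly_pCons algebra_simps)
  hence "R = 0" by (subst R) (simp only: of_rat_lincomb_eq_iff[OF assms(1)] pCons_0_0)
  thus ?thesis unfolding R_def g_def by (simp add: mod_eq_0_iff_dvd)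
qed

lemma algebraic_int_of_square:
  fixes x :: "'a::field_char_0"
  assumes "algebraic_int (x^2)"
  shows "algebraic_int x"
  by (rule algebraic_int_root[OF assms, where p = "Polynomial.monom 1 2"])
     (auto simp: coeff_monom poly_monom degree_monom_eq)

definition quad_elem :: "int \<Rightarrow> int \<Rightarrow> int \<Rightarrow> complex" where
  "quad_elem d A B = (of_int A + of_int B * csqrt (of_int d)) / 2"

lemma quad_elem_add: "quad_elem d A B + quad_elem d A' B' = quad_elem d (A + A') (B + B')"
  unfolding quad_elem_def by (simp add: field_simps)

lemma quad_elem_mult:
  "2 * (quad_elem d A B * quad_elem d A' B') = quad_elem d (A * A' + d * B * B') (A * B' + A' * B)"
  unfolding quad_elem_def by (simp add: field_simps)

lemma of_int_mult_quad_elem: "of_int k * quad_elem d A B = quad_elem d (k * A) (k * B)"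
  unfolding quad_elem_def by (simp add: field_simps)

lemma quad_elem_in_quad_field: "quad_elem d A B \<in> quad_field d"
  unfolding quad_field_def quad_elem_def
  by (rule CollectI, rule exI[of _ "of_int A / 2"], rule exI[of _ "of_int B / 2"])
     (simp add: of_rat_divide field_simps)

lemma quad_elem_in_quad_ints:
  assumes "4 dvd A^2 - d * B^2"
  shows "quad_elem d A B \<in> quad_ints d"
proof -
  obtain c where c: "A^2 - d * B^2 = 4 * c" using assms ..
  have "poly (of_int_poly [:c, -A, 1:]) (quad_elem d A B) = 0"
    using arg_cong[OF c, of "of_int :: int \<Rightarrow> complex"]
    unfolding quad_elem_def by (simp add: field_simps power2_eq_square)
  hence "algebraic_int (quad_elem d A B)"
    unfolding algebraic_int_altdef_ipoly by (intro exI[of _ "[:c, -A, 1:]"]) simp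
  thus ?thesis unfolding quad_ints_def using quad_elem_in_quad_field by blast
qed

lemma of_int_in_quad_ints: "of_int n \<in> quad_ints d"
proof -
  have "quad_elem d (2 * n) 0 \<in> quad_ints d"
    by (rule quad_elem_in_quad_ints) (simp add: power2_eq_square)
  thus ?thesis unfolding quad_elem_def by simp
qed

lemma csqrt_in_quad_ints: "csqrt (of_int d) \<in> quad_ints d"
proof -
  have "quad_elem d 0 2 \<in> quad_ints d" by (rule quad_elem_in_quad_ints) simp
  thus ?thesis unfolding quad_elem_def by simp
qed

lemma of_rat_in_quad_field: "of_rat q \<in> quad_field d"
  unfolding quad_field_def by (rule CollectI, rule exI[of _ q], rule exI[of _ 0]) simp

lemma quad_field_mult:
  assumes "x \<in> quad_field d" and "y \<in> quad_field d"
  shows "x * y \<in> quad_field d"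
proof -
  obtain a b a' b' where x: "x = of_rat a + of_rat b * csqrt (of_int d)"
    and y: "y = of_rat a' + of_rat b' * csqrt (of_int d)"
    using assms unfolding quad_field_def by auto
  have "x * y = of_rat (a * a' + of_int d * b * b') + of_rat (a * b' + a' * b) * csqrt (of_int d)"
    unfolding x y by (simp add: of_rat_add of_rat_mult algebra_simps)
  thus ?thesis unfolding quad_field_def by blast
qed

context squarefree_radicand
begin

lemma quad_elem_eq_iff: "quad_elem d A B = quad_elem d A' B' \<longleftrightarrow> A = A' \<and> B = B'"
  using of_rat_lincomb_eq_iff[OF csqrt_notin_Rats, of "of_int A" "of_int B" "of_int A'" "of_int B'"]
  unfolding quad_elem_def by simp

lemma algebraic_int_coords_Ints:
  assumes "algebraic_int (of_rat \<alpha> + of_rat \<beta> * csqrt (of_int d) :: complex)"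
  shows "2 * \<alpha> \<in> \<int>" and "\<alpha>^2 - of_int d * \<beta>^2 \<in> \<int>"
proof (atomize (full), cases "\<beta> = 0")
  case True
  hence "(of_rat \<alpha> :: complex) \<in> \<int>"
    using assms by (intro rational_algebraic_int_is_int) auto
  hence "\<alpha> \<in> \<int>" by (metis Ints_cases Ints_of_int of_rat_eq_iff of_rat_of_int_eq)
  thus "2 * \<alpha> \<in> \<int> \<and> \<alpha>^2 - of_int d * \<beta>^2 \<in> \<int>" using True by simp
next
  case False
  define x :: complex where "x = of_rat \<alpha> + of_rat \<beta> * csqrt (of_int d)"
  have "x \<notin> \<rat>"
  proof
    assume "x \<in> \<rat>"
    then obtain q where "x = of_rat q" by (auto elim: Rats_cases)
    hence "csqrt (of_int d) = of_rat ((q - \<alpha>) / \<beta>)"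
      using False unfolding x_def by (simp add: of_rat_divide of_rat_diff field_simps)
    thus False using csqrt_notin_Rats by simp
  qed
  moreover have "x^2 = of_rat (2 * \<alpha>) * x - of_rat (\<alpha>^2 - of_int d * \<beta>^2)"
    unfolding x_def by (simp add: of_rat_mult of_rat_diff of_rat_power algebra_simps power2_eq_square)
  moreover obtain P where P: "poly (of_int_poly P) x = 0" "lead_coeff P = 1"
    using assms unfolding x_def algebraic_int_altdef_ipoly by blast
  moreover have "map_poly of_rat (of_int_poly P) = (of_int_poly P :: complex poly)"
    by (simp add: map_poly_map_poly o_def)
  ultimately have "[:\<alpha>^2 - of_int d * \<beta>^2, -(2 * \<alpha>), 1:] dvd of_int_poly P"
    using quadratic_dvd_of_irrational_root by metis
  then obtain h where "of_int_poly P = [:\<alpha>^2 - of_int d * \<beta>^2, -(2 * \<alpha>), 1:] * h" ..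
  from monic_factor_of_monic_int_poly_integral[OF this P(2)]
  have "Polynomial.coeff [:\<alpha>^2 - of_int d * \<beta>^2, -(2 * \<alpha>), 1:] i \<in> \<int>" for i
    by simp
  from this[of 0] this[of 1]
  show "2 * \<alpha> \<in> \<int> \<and> \<alpha>^2 - of_int d * \<beta>^2 \<in> \<int>" by (simp add: minus_in_Ints_iff)
qed

lemma quad_ints_iff: "x \<in> quad_ints d \<longleftrightarrow> (\<exists>A B. x = quad_elem d A B \<and> 4 dvd A^2 - d * B^2)"
proof
  assume "x \<in> quad_ints d"
  then obtain \<alpha> \<beta> where x: "x = of_rat \<alpha> + of_rat \<beta> * csqrt (of_int d)" and "algebraic_int x"
    unfolding quad_ints_def quad_field_def by auto
  then obtain A N where A: "2 * \<alpha> = of_int A" and N: "\<alpha>^2 - of_int d * \<beta>^2 = of_int N"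
    using algebraic_int_coords_Ints by (metis Ints_cases)
  have "of_int d * (2 * \<beta>)^2 = (2 * \<alpha>)^2 - 4 * (\<alpha>^2 - of_int d * \<beta>^2)"
    by (simp add: algebra_simps power2_eq_square)
  also have "\<dots> = of_int (A^2 - 4 * N)" unfolding A N by simp
  finally obtain B where B: "2 * \<beta> = of_int B"
    using squarefree_mult_square_in_Ints[OF squarefree] by (metis Ints_cases)
  have "(of_int A :: complex) = of_rat (2 * \<alpha>)" "(of_int B :: complex) = of_rat (2 * \<beta>)"
    unfolding A B by simp_all
  hence "x = quad_elem d A B" unfolding x quad_elem_def by (simp add: of_rat_mult)
  moreover have "A^2 - d * B^2 = 4 * N"
  proof -
    have "rat_of_int (A^2 - d * B^2) = (2 * \<alpha>)^2 - of_int d * (2 * \<beta>)^2"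
      unfolding A B by simp
    also have "\<dots> = 4 * (\<alpha>^2 - of_int d * \<beta>^2)" by (simp add: algebra_simps power2_eq_square)
    also have "\<dots> = of_int (4 * N)" unfolding N by simp
    finally show ?thesis by (simp only: of_int_eq_iff)
  qed
  ultimately show "\<exists>A B. x = quad_elem d A B \<and> 4 dvd A^2 - d * B^2" by (metis dvd_triv_left)
qed (auto intro: quad_elem_in_quad_ints)

end

section \<open>The ring of integers and its units\<close>

lemma square_mod_4: "(x::int)^2 mod 4 = (if even x then 0 else 1)"
proof (cases "even x")
  case True
  then obtain k where "x = 2 * k" ..
  thus ?thesis by (simp add: power2_eq_square)
next
  case False
  then obtain k where "x = 2 * k + 1" using oddE by blast
  hence "x^2 = 4 * (k^2 + k) + 1" by (simp add: algebra_simps power2_eq_square)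
  thus ?thesis using False by presburger
qed

lemma quad_coords_parity:
  fixes d A B :: int
  assumes "squarefree d" and "4 dvd A^2 - d * B^2"
  shows "even A \<longleftrightarrow> even B" and "d mod 4 \<noteq> 1 \<Longrightarrow> even A \<and> even B"
proof -
  have "d mod 4 \<noteq> 0"
  proof
    assume "d mod 4 = 0"
    hence "2^2 dvd d" by (simp add: mod_0_imp_dvd)
    thus False using assms(1) squarefreeD[of d 2] by simp
  qed
  hence "d mod 4 \<in> {1, 2, 3}" by auto
  moreover have "A^2 mod 4 = ((d mod 4) * (B^2 mod 4)) mod 4"
    using assms(2) by (simp add: mod_eq_dvd_iff[symmetric] mod_mult_eq)
  ultimately show "even A \<longleftrightarrow> even B" and "d mod 4 \<noteq> 1 \<Longrightarrow> even A \<and> even B"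
    unfolding square_mod_4 by (auto split: if_splits)
qed

lemma quad_coords_mult_even:
  fixes d A B A' B' :: int
  assumes "squarefree d" and "4 dvd A^2 - d * B^2" and "4 dvd A'^2 - d * B'^2"
  shows "even (A * A' + d * B * B')" and "even (A * B' + A' * B)"
proof -
  note parity = quad_coords_parity[OF assms(1,2)] quad_coords_parity[OF assms(1,3)]
  show "even (A * A' + d * B * B')" and "even (A * B' + A' * B)"
  proof (atomize (full), cases "d mod 4 = 1")
    case True
    hence "odd d" by presburger
    thus "even (A * A' + d * B * B') \<and> even (A * B' + A' * B)"
      using parity by (cases "even A"; cases "even A'") auto
  qed (use parity in auto)
qed

lemma quad_unit_one: "quad_unit d 1"
  unfolding quad_unit_def using of_int_in_quad_ints[of 1 d] by auto

lemma quad_unit_minus_one: "quad_unit d (-1)"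
  unfolding quad_unit_def using of_int_in_quad_ints[of "-1" d] by (intro conjI bexI[of _ "-1"]) auto

context squarefree_radicand
begin

lemma quad_ints_add:
  assumes "x \<in> quad_ints d" and "y \<in> quad_ints d"
  shows "x + y \<in> quad_ints d"
proof -
  obtain A B A' B' where x: "x = quad_elem d A B" and y: "y = quad_elem d A' B'"
    and N: "4 dvd A^2 - d * B^2" and N': "4 dvd A'^2 - d * B'^2"
    using assms quad_ints_iff by meson
  obtain C where C: "A * A' + d * B * B' = 2 * C"
    using quad_coords_mult_even(1)[OF squarefree N N'] by (meson evenE)
  have "(A + A')^2 - d * (B + B')^2 = (A^2 - d * B^2) + (A'^2 - d * B'^2) + 4 * (C - d * B * B')"
    using C by (simp add: algebra_simps power2_eq_square)
  hence "4 dvd (A + A')^2 - d * (B + B')^2" using N N' by simp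
  thus ?thesis unfolding x y quad_elem_add by (rule quad_elem_in_quad_ints)
qed

lemma quad_ints_mult:
  assumes "x \<in> quad_ints d" and "y \<in> quad_ints d"
  shows "x * y \<in> quad_ints d"
proof -
  obtain A B A' B' where x: "x = quad_elem d A B" and y: "y = quad_elem d A' B'"
    and N: "4 dvd A^2 - d * B^2" and N': "4 dvd A'^2 - d * B'^2"
    using assms quad_ints_iff by meson
  obtain C D where C: "A * A' + d * B * B' = 2 * C" and D: "A * B' + A' * B = 2 * D"
    using quad_coords_mult_even[OF squarefree N N'] by (meson evenE)
  have "2 * (x * y) = 2 * quad_elem d C D"
    unfolding x y quad_elem_mult C D of_int_mult_quad_elem[of 2, symmetric] by simp
  hence xy: "x * y = quad_elem d C D" by simp
  obtain n n' where n: "A^2 - d * B^2 = 4 * n" and n': "A'^2 - d * B'^2 = 4 * n'"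
    using N N' by (meson dvdE)
  have "4 * (C^2 - d * D^2) = (2 * C)^2 - d * (2 * D)^2"
    by (simp add: algebra_simps power2_eq_square)
  also have "\<dots> = (A^2 - d * B^2) * (A'^2 - d * B'^2)"
    unfolding C[symmetric] D[symmetric] by (simp add: algebra_simps power2_eq_square)
  finally have "C^2 - d * D^2 = 4 * (n * n')" unfolding n n' by simp
  thus ?thesis unfolding xy by (intro quad_elem_in_quad_ints) simp
qed

lemma quad_unit_mult:
  assumes "quad_unit d e" and "quad_unit d e'"
  shows "quad_unit d (e * e')"
proof -
  obtain u u' where "e \<in> quad_ints d" "e' \<in> quad_ints d" "u \<in> quad_ints d" "u' \<in> quad_ints d"
    and "e * u = 1" "e' * u' = 1"
    using assms unfolding quad_unit_def by blast
  moreover have "(e * e') * (u * u') = (e * u) * (e' * u')" by (simp add: ac_simps)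
  ultimately show ?thesis unfolding quad_unit_def using quad_ints_mult by auto
qed

lemma quad_unit_coords:
  assumes "quad_unit d e"
  obtains E F where "e = quad_elem d E F" and "E^2 - d * F^2 = 4 \<or> E^2 - d * F^2 = -4"
proof -
  obtain u where "e \<in> quad_ints d" "u \<in> quad_ints d" "e * u = 1"
    using assms unfolding quad_unit_def by blast
  then obtain E F U V where e: "e = quad_elem d E F" and u: "u = quad_elem d U V"
    and "4 dvd E^2 - d * F^2" "4 dvd U^2 - d * V^2" and "e * u = 1"
    using quad_ints_iff by meson
  then obtain n m where n: "E^2 - d * F^2 = 4 * n" and m: "U^2 - d * V^2 = 4 * m"
    by (meson dvdE)
  have "quad_elem d (E * U + d * F * V) (E * V + U * F) = quad_elem d 4 0"
    using quad_elem_mult[of d E F U V] \<open>e * u = 1\<close> unfolding e u by (simp add: quad_elem_def)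
  hence EU: "E * U + d * F * V = 4" and EV: "E * V + U * F = 0"
    using quad_elem_eq_iff by auto
  have "(E * U + d * F * V)^2 - d * (E * V + U * F)^2 = (E^2 - d * F^2) * (U^2 - d * V^2)"
    by (simp add: algebra_simps power2_eq_square)
  hence "n * m = 1" unfolding EU EV n m by simp
  hence "n = 1 \<or> n = -1" using zmult_eq_1_iff by blast
  thus ?thesis using that e n by auto
qed

lemma quad_ideal_two_generators:
  assumes "a \<in> quad_ints d" and "b \<in> quad_ints d"
  shows "quad_ideal d {a * x + b * y | x y. x \<in> quad_ints d \<and> y \<in> quad_ints d}"
    (is "quad_ideal d ?I")
  unfolding quad_ideal_def
proof (intro conjI ballI)
  show "?I \<subseteq> quad_ints d" using assms quad_ints_add quad_ints_mult by blast
  show "0 \<in> ?I" using of_int_in_quad_ints[of 0 d] by force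
next
  fix z z' assume "z \<in> ?I" "z' \<in> ?I"
  then obtain x y x' y' where "z = a * x + b * y" "z' = a * x' + b * y'"
    and "x \<in> quad_ints d" "y \<in> quad_ints d" "x' \<in> quad_ints d" "y' \<in> quad_ints d" by blast
  moreover have "a * x + b * y + (a * x' + b * y') = a * (x + x') + b * (y + y')"
    by (simp add: algebra_simps)
  ultimately show "z + z' \<in> ?I" using quad_ints_add by blast
next
  fix z c assume "z \<in> ?I" "c \<in> quad_ints d"
  then obtain x y where "z = a * x + b * y" "x \<in> quad_ints d" "y \<in> quad_ints d" by blast
  moreover have "c * (a * x + b * y) = a * (c * x) + b * (c * y)" by (simp add: algebra_simps)
  ultimately show "c * z \<in> ?I" using quad_ints_mult \<open>c \<in> quad_ints d\<close> by blast
qed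

end

section \<open>Units times squares and the ramified primes\<close>

definition square_up_to_unit :: "int \<Rightarrow> complex \<Rightarrow> bool" where
  "square_up_to_unit d z \<longleftrightarrow> (\<exists>e. quad_unit d e \<and> (\<exists>y\<in>quad_field d. e * z = y^2))"

lemma square_up_to_unit_square: "y \<in> quad_field d \<Longrightarrow> square_up_to_unit d (y^2)"
  unfolding square_up_to_unit_def using quad_unit_one by fastforce

lemma square_up_to_unit_minus_one: "square_up_to_unit d (-1)"
  unfolding square_up_to_unit_def using quad_unit_minus_one of_rat_in_quad_field[of 1]
  by (intro exI[of _ "-1"]) force

lemma prime_dvd_quad_disc_cases:
  fixes p d :: int
  assumes "prime p" and "p dvd quad_disc d"
  shows "p dvd d \<or> (p = 2 \<and> d mod 4 = 3)"
proof (cases "d mod 4 = 1")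
  case False
  hence "p dvd 2^2 * d" using assms(2) unfolding quad_disc_def by simp
  hence "p dvd 2^2 \<or> p dvd d" by (simp only: prime_dvd_mult_iff[OF assms(1)])
  hence "p dvd 2 \<or> p dvd d" using prime_dvd_power[OF assms(1)] by blast
  hence "p = 2 \<or> p dvd d" using assms(1) by (auto intro: primes_dvd_imp_eq)
  thus ?thesis using False by auto presburger
qed (use assms in \<open>simp add: quad_disc_def\<close>)

lemma quad_disc_nonzero: "squarefree d \<Longrightarrow> quad_disc d \<noteq> 0"
  unfolding quad_disc_def by auto

context squarefree_radicand
begin

lemma square_up_to_unit_mult:
  assumes "square_up_to_unit d z" and "square_up_to_unit d z'"
  shows "square_up_to_unit d (z * z')"
proof -
  obtain e e' y y' where "quad_unit d e" "quad_unit d e'" "y \<in> quad_field d" "y' \<in> quad_field d"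
    and "e * z = y^2" "e' * z' = y'^2"
    using assms unfolding square_up_to_unit_def by blast
  moreover have "(e * e') * (z * z') = (e * z) * (e' * z')" by (simp add: ac_simps)
  ultimately show ?thesis unfolding square_up_to_unit_def
    by (metis quad_unit_mult quad_field_mult power_mult_distrib)
qed

lemma square_up_to_unit_mult_rat_square:
  "square_up_to_unit d (of_rat r) \<Longrightarrow> square_up_to_unit d (of_rat (r * q^2))"
  using square_up_to_unit_mult[OF _ square_up_to_unit_square[OF of_rat_in_quad_field[of q]]]
  by (simp add: of_rat_mult of_rat_power)

lemma square_up_to_unit_prod_mset:
  "(\<And>p. p \<in># M \<Longrightarrow> square_up_to_unit d (of_int p)) \<Longrightarrow> square_up_to_unit d (of_int (prod_mset M))"
proof (induction M)
  case empty
  show ?case using square_up_to_unit_square[OF of_rat_in_quad_field[of 1]] by simp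
qed (simp add: square_up_to_unit_mult)

text \<open>The hypotheses say that the ideal \<open>(p, g)\<close> squares to \<open>(p)\<close>; the generator \<open>\<pi>\<close> of
  \<open>(p, g)\<close> then satisfies \<open>(\<pi>\<^sup>2) = (p)\<close>.\<close>
lemma square_up_to_unit_if_ideal_square:
  assumes "class_number_one d" and p: "p \<in> quad_ints d" "p \<noteq> 0"
    and g: "g \<in> quad_ints d" and h: "h \<in> quad_ints d" and gh: "g^2 = p * h"
    and a: "a1 \<in> quad_ints d" "a2 \<in> quad_ints d" "a3 \<in> quad_ints d"
    and pa: "p = a1 * p^2 + a2 * g^2 + a3 * p * g"
  shows "square_up_to_unit d p"
proof -
  let ?I = "{p * x + g * y | x y. x \<in> quad_ints d \<and> y \<in> quad_ints d}"
  obtain \<pi> where \<pi>: "\<pi> \<in> quad_ints d" and I: "?I = {\<pi> * z | z. z \<in> quad_ints d}"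
    using assms(1) quad_ideal_two_generators[OF p(1) g] unfolding class_number_one_def by blast
  have O01: "0 \<in> quad_ints d" "1 \<in> quad_ints d"
    using of_int_in_quad_ints[of 0 d] of_int_in_quad_ints[of 1 d] by simp_all
  have "p \<in> ?I" "g \<in> ?I" using O01 by force+
  then obtain \<gamma> \<delta> where \<gamma>: "\<gamma> \<in> quad_ints d" "p = \<pi> * \<gamma>" and \<delta>: "\<delta> \<in> quad_ints d" "g = \<pi> * \<delta>"
    unfolding I by blast
  have "\<pi> \<in> ?I" unfolding I using O01(2) by (intro CollectI exI[of _ 1]) simp
  then obtain \<alpha> \<beta> where \<alpha>\<beta>: "\<alpha> \<in> quad_ints d" "\<beta> \<in> quad_ints d" "\<pi> = p * \<alpha> + g * \<beta>"
    by blast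
  define u where "u = p * \<alpha>^2 + 2 * g * \<alpha> * \<beta> + h * \<beta>^2"
  define w where "w = a1 * \<gamma>^2 + a2 * \<delta>^2 + a3 * \<gamma> * \<delta>"
  have "u \<in> quad_ints d" "w \<in> quad_ints d"
    unfolding u_def w_def power2_eq_square using of_int_in_quad_ints[of 2 d]
    by (intro quad_ints_add quad_ints_mult p g h a \<alpha>\<beta> \<gamma> \<delta>; simp)+
  have \<pi>u: "\<pi>^2 = p * u"
    unfolding \<alpha>\<beta>(3) u_def by (simp add: algebra_simps power2_eq_square gh[unfolded power2_eq_square])
  have "p = a1 * (\<pi> * \<gamma>)^2 + a2 * (\<pi> * \<delta>)^2 + a3 * (\<pi> * \<gamma>) * (\<pi> * \<delta>)"
    using pa unfolding \<gamma>(2)[symmetric] \<delta>(2)[symmetric] .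
  also have "\<dots> = \<pi>^2 * w" unfolding w_def by (simp add: algebra_simps power2_eq_square)
  finally have "p * 1 = p * (u * w)" using \<pi>u by (simp add: ac_simps)
  hence "u * w = 1" using p(2) by simp
  hence "quad_unit d u" unfolding quad_unit_def using \<open>u \<in> quad_ints d\<close> \<open>w \<in> quad_ints d\<close> by blast
  moreover have "u * p = \<pi>^2" using \<pi>u by (simp add: ac_simps)
  moreover have "\<pi> \<in> quad_field d" using \<pi> unfolding quad_ints_def by simp
  ultimately show ?thesis unfolding square_up_to_unit_def by blast
qed

lemma square_up_to_unit_prime_dvd_radicand:
  assumes "class_number_one d" and p: "prime p" "p dvd d"
  shows "square_up_to_unit d (of_int p)"
proof -
  let ?s = "csqrt (of_int d) :: complex"
  have O: "of_int n \<in> quad_ints d" for n using of_int_in_quad_ints .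
  obtain k where k: "d = p * k" using p(2) ..
  have "\<not> p dvd k"
  proof
    assume "p dvd k"
    hence "p^2 dvd d" using k by (simp add: power2_eq_square)
    thus False using squarefree squarefreeD p(1) not_prime_unit by blast
  qed
  then obtain s t where st: "s * p + t * k = 1"
    using bezout_int[of p k] p(1) prime_imp_coprime[of p k] by (auto simp: coprime_iff_gcd_eq_1)
  have "p = p * (s * p + t * k)" using st by simp
  also have "\<dots> = s * p^2 + t * d" unfolding k by (simp add: algebra_simps power2_eq_square)
  finally have "(of_int p :: complex) = of_int (s * p^2 + t * d)" by (simp only:)
  hence "(of_int p :: complex) = of_int s * (of_int p)^2 + of_int t * ?s^2 + 0 * of_int p * ?s"
    by simp
  moreover have "?s^2 = of_int p * of_int k" by (simp add: k)
  moreover have "of_int p \<noteq> (0 :: complex)" using p(1) by auto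
  ultimately show ?thesis
    using square_up_to_unit_if_ideal_square[OF assms(1) O[of p] _ csqrt_in_quad_ints O[of k] _
        O[of s] O[of t] O[of 0]]
    by simp
qed

lemma square_up_to_unit_two:
  assumes "class_number_one d" and "d mod 4 = 3"
  shows "square_up_to_unit d 2"
proof -
  let ?s = "csqrt (of_int d) :: complex"
  have O: "of_int n \<in> quad_ints d" for n using of_int_in_quad_ints .
  define k where "k = d div 4"
  have k: "d = 4 * k + 3" unfolding k_def using assms(2) by presburger
  let ?g = "1 + ?s" and ?h = "of_int (2 * k + 2) + ?s"
  have "?g \<in> quad_ints d" "?h \<in> quad_ints d"
    using O[of 1] O[of "2 * k + 2"] csqrt_in_quad_ints quad_ints_add by simp_all
  moreover have "?g^2 = 2 * ?h"
    by (simp add: power2_eq_square k algebra_simps)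
  moreover have "2 = of_int (-k) * 2^2 + 1 * ?g^2 + (-1) * 2 * ?g"
    by (simp add: power2_eq_square k algebra_simps)
  ultimately show ?thesis
    using square_up_to_unit_if_ideal_square[OF assms(1) O[of 2] _ _ _ _ O[of "-k"] O[of 1] O[of "-1"]]
    by simp
qed

lemma square_up_to_unit_prime_dvd_quad_disc:
  assumes "class_number_one d" and "prime p" and "p dvd quad_disc d"
  shows "square_up_to_unit d (of_int p)"
  using prime_dvd_quad_disc_cases[OF assms(2,3)] square_up_to_unit_prime_dvd_radicand[OF assms(1,2)]
    square_up_to_unit_two[OF assms(1)] by auto

lemma square_up_to_unit_dvd_quad_disc:
  assumes "class_number_one d" and "n \<noteq> 0" and "n dvd quad_disc d"
  shows "square_up_to_unit d (of_int n)"
proof -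
  have "square_up_to_unit d (of_int (prod_mset (prime_factorization n)))"
    using assms by (intro square_up_to_unit_prod_mset square_up_to_unit_prime_dvd_quad_disc)
      (auto intro: dvd_trans in_prime_factors_imp_dvd in_prime_factors_imp_prime)
  hence "square_up_to_unit d (of_int \<bar>n\<bar>)" using assms(2) by (simp add: prod_mset_prime_factorization)
  moreover have "of_int n = (if n < 0 then -1 else 1) * (of_int \<bar>n\<bar> :: complex)" by simp
  ultimately show ?thesis using square_up_to_unit_minus_one square_up_to_unit_mult by (metis mult_1)
qed

end

section \<open>Unramified primes\<close>

lemma prime_not_dvd_quad_disc:
  fixes p d :: int
  assumes "\<not> p dvd quad_disc d"
  shows "\<not> p dvd d" and "p = 2 \<Longrightarrow> d mod 4 = 1"
  using assms unfolding quad_disc_def by (auto split: if_splits)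

lemma odd_prime_square_dvd_norm:
  fixes p d A B :: int
  assumes p: "prime p" "p \<noteq> 2" and "\<not> p dvd d"
    and "p dvd A^2 + d * B^2" and "p dvd A^2 - d * B^2"
  shows "p^2 dvd A^2 - d * B^2"
proof -
  have "\<not> p dvd 2" using p primes_dvd_imp_eq[of p 2] by auto
  have "p dvd 2 * A^2" "p dvd 2 * (d * B^2)"
    using dvd_add[OF assms(4,5)] dvd_diff[OF assms(4,5)] by (simp_all add: algebra_simps)
  hence "p dvd A" "p dvd B"
    using \<open>\<not> p dvd 2\<close> \<open>\<not> p dvd d\<close> p(1) by (auto simp: prime_dvd_mult_iff dest: prime_dvd_power)
  then obtain a b where "A = p * a" "B = p * b" by (meson dvdE)
  hence "A^2 - d * B^2 = p^2 * (a^2 - d * b^2)" by (simp add: algebra_simps power2_eq_square)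
  thus ?thesis by simp
qed

lemma norm_mod_16_ne_8:
  fixes d A B :: int
  assumes "d mod 4 = 1" and "4 dvd A^2 + d * B^2"
  shows "(A^2 - d * B^2) mod 16 \<noteq> 8"
proof -
  obtain k where d: "d = 4 * k + 1" using assms(1) by (metis mult.commute div_mult_mod_eq)
  have "A^2 + B^2 = (A^2 + d * B^2) - 4 * (k * B^2)" unfolding d by (simp add: algebra_simps)
  hence "4 dvd A^2 + B^2" using assms(2) by (metis dvd_diff dvd_triv_left)
  hence "(A^2 mod 4 + B^2 mod 4) mod 4 = 0" by (simp add: mod_add_eq)
  hence "even A" "even B" unfolding square_mod_4 by (auto split: if_splits)
  then obtain a b where "A = 2 * a" "B = 2 * b" by (meson evenE)
  hence "A^2 - d * B^2 = 4 * a^2 - 4 * b^2 - 16 * (k * b^2)"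
    unfolding d by (simp add: algebra_simps power2_eq_square)
  moreover have "a^2 mod 4 = 0 \<or> a^2 mod 4 = 1" "b^2 mod 4 = 0 \<or> b^2 mod 4 = 1"
    unfolding square_mod_4 by simp_all
  moreover have "(4 * X - 4 * Y - 16 * Z) mod 16 \<noteq> 8"
    if "X mod 4 = 0 \<or> X mod 4 = 1" "Y mod 4 = 0 \<or> Y mod 4 = 1" for X Y Z :: int
    using that by presburger
  ultimately show ?thesis by metis
qed

context squarefree_radicand
begin

text \<open>Comparing rational parts of \<open>y\<^sup>2 = e P\<close> gives the first equation; comparing norms gives
  \<open>N(y)\<^sup>2 = N(e) P\<^sup>2\<close>, which forces \<open>N(e) = 1\<close> and \<open>N(y) = \<plusminus>P\<close>.\<close>
lemma square_eq_unit_times_int_coords: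
  assumes "quad_unit d e" and "y \<in> quad_ints d" and "y^2 = e * of_int P" and "P \<noteq> 0"
  obtains A B E where "y = quad_elem d A B" and "A^2 + d * B^2 = 2 * P * E"
    and "A^2 - d * B^2 = 4 * P \<or> A^2 - d * B^2 = -(4 * P)"
proof -
  obtain A B where y: "y = quad_elem d A B" using assms(2) quad_ints_iff by blast
  obtain E F where e: "e = quad_elem d E F" and NE: "E^2 - d * F^2 = 4 \<or> E^2 - d * F^2 = -4"
    using quad_unit_coords[OF assms(1)] by blast
  have "quad_elem d (A * A + d * B * B) (A * B + A * B) = quad_elem d (2 * P * E) (2 * P * F)"
    using quad_elem_mult[of d A B A B] of_int_mult_quad_elem[of "2 * P" d E F] assms(3)
    unfolding y e by (simp add: power2_eq_square ac_simps)
  hence tr: "A^2 + d * B^2 = 2 * P * E" and AB: "A * B = P * F"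
    using quad_elem_eq_iff by (auto simp: power2_eq_square)
  have "(A^2 - d * B^2)^2 = (A^2 + d * B^2)^2 - 4 * d * (A * B)^2"
    by (simp add: algebra_simps power2_eq_square)
  also have "\<dots> = 4 * P^2 * (E^2 - d * F^2)"
    unfolding tr AB by (simp add: algebra_simps power2_eq_square)
  finally have sq: "(A^2 - d * B^2)^2 = 4 * P^2 * (E^2 - d * F^2)" .
  have "E^2 - d * F^2 = 4"
  proof (rule ccontr)
    assume "E^2 - d * F^2 \<noteq> 4"
    hence "(A^2 - d * B^2)^2 = - (16 * P^2)" using sq NE by simp
    moreover have "P^2 > 0" using assms(4) by simp
    ultimately show False
      by (metis neg_less_0_iff_less zero_le_power2 zero_less_mult_iff zero_less_numeral not_less)
  qed
  hence "(A^2 - d * B^2)^2 = (4 * P)^2" using sq by (simp add: power_mult_distrib)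
  hence "A^2 - d * B^2 = 4 * P \<or> A^2 - d * B^2 = -(4 * P)" by (simp only: power2_eq_iff)
  thus ?thesis using that y tr by blast
qed

lemma not_square_up_to_unit_unramified:
  assumes p: "prime p" "\<not> p dvd quad_disc d" and "\<not> p dvd m"
  shows "\<not> square_up_to_unit d (of_int (p * m))"
proof
  assume "square_up_to_unit d (of_int (p * m))"
  then obtain e y where e: "quad_unit d e" and "y \<in> quad_field d" and ey: "y^2 = e * of_int (p * m)"
    unfolding square_up_to_unit_def by metis
  have "y^2 \<in> quad_ints d"
    using e of_int_in_quad_ints quad_ints_mult unfolding ey quad_unit_def by blast
  hence y: "y \<in> quad_ints d"
    using \<open>y \<in> quad_field d\<close> algebraic_int_of_square unfolding quad_ints_def by blast
  have "p * m \<noteq> 0" using p(1) \<open>\<not> p dvd m\<close> by auto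
  then obtain A B E where "y = quad_elem d A B" and tr: "A^2 + d * B^2 = 2 * (p * m) * E"
    and N: "A^2 - d * B^2 = 4 * (p * m) \<or> A^2 - d * B^2 = -(4 * (p * m))"
    by (rule square_eq_unit_times_int_coords[OF e y ey])
  show False
  proof (cases "p = 2")
    case False
    have "p dvd A^2 + d * B^2" "p dvd A^2 - d * B^2" using tr N by auto
    hence "p^2 dvd A^2 - d * B^2"
      by (rule odd_prime_square_dvd_norm[OF p(1) False prime_not_dvd_quad_disc(1)[OF p(2)]])
    hence "p * p dvd p * (4 * m)" using N by (auto simp: power2_eq_square ac_simps)
    hence "p dvd 2^2 * m" using p(1) by simp
    hence "p dvd 2^2 \<or> p dvd m" by (simp only: prime_dvd_mult_iff[OF p(1)])
    hence "p dvd 2" using \<open>\<not> p dvd m\<close> prime_dvd_power[OF p(1)] by blast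
    thus False using False p(1) primes_dvd_imp_eq[of p 2] by simp
  next
    case True
    hence "d mod 4 = 1" and "odd m" using prime_not_dvd_quad_disc(2)[OF p(2)] \<open>\<not> p dvd m\<close> by auto
    moreover have "4 dvd A^2 + d * B^2" using tr True by simp
    moreover have "(A^2 - d * B^2) mod 16 = 8" using N True \<open>odd m\<close> by presburger
    ultimately show False using norm_mod_16_ne_8 by blast
  qed
qed

end

section \<open>Valuations\<close>

lemma rat_times_square_eq_int:
  fixes r :: rat
  assumes "r \<noteq> 0"
  obtains n :: int and c :: rat where "n \<noteq> 0" and "c \<noteq> 0" and "r * c^2 = of_int n"
    and "\<And>p. prime p \<Longrightarrow> odd (padic_val_rat p r) \<longleftrightarrow> odd (multiplicity p n)"
proof -
  obtain a b where ab: "quotient_of r = (a, b)" by fastforce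
  have "b > 0" and r: "r = of_int a / of_int b"
    using quotient_of_denom_pos[OF ab] quotient_of_div[OF ab] by auto
  hence "a \<noteq> 0" using assms by auto
  have "r * (of_int b)^2 = of_int (a * b)" using \<open>b > 0\<close> unfolding r by (simp add: power2_eq_square)
  moreover have "odd (padic_val_rat p r) \<longleftrightarrow> odd (multiplicity p (a * b))" if "prime p" for p
  proof -
    have "multiplicity p (a * b) = multiplicity p a + multiplicity p b"
      using that \<open>a \<noteq> 0\<close> \<open>b > 0\<close>
      by (intro prime_elem_multiplicity_mult_distrib prime_imp_prime_elem) auto
    thus ?thesis by (simp add: padic_val_rat_def ab)
  qed
  ultimately show ?thesis using that[of "a * b" "of_int b"] \<open>a \<noteq> 0\<close> \<open>b > 0\<close> by simp
qed

lemma prime_dvd_of_odd_padic_val: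
  fixes d' :: int and r q :: rat
  assumes "d' \<noteq> 0" and "r \<noteq> 0" and "of_int d' * r = q^2"
    and "prime p" and "odd (padic_val_rat p r)"
  shows "p dvd d'"
proof -
  obtain n c where "n \<noteq> 0" "c \<noteq> 0" and nc: "r * c^2 = of_int n"
    and odd: "odd (multiplicity p n)" using rat_times_square_eq_int[OF assms(2)] assms(4,5) by metis
  have "of_int 1 * (q * c)^2 = of_int (d' * n)" using assms(3) nc
    by (simp add: power_mult_distrib) (metis mult.assoc)
  then obtain k where "q * c = of_int k"
    using squarefree_mult_square_in_Ints[of 1] by (metis Ints_cases squarefree_1)
  hence "d' * n = k^2" using \<open>of_int 1 * (q * c)^2 = of_int (d' * n)\<close>
    by (metis of_int_eq_iff of_int_power mult_1 of_int_1)
  moreover have "k \<noteq> 0" using calculation assms(1) \<open>n \<noteq> 0\<close> by auto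
  ultimately have "multiplicity p d' + multiplicity p n = 2 * multiplicity p k"
    using assms(1,4) \<open>n \<noteq> 0\<close> prime_imp_prime_elem[OF assms(4)]
    by (metis prime_elem_multiplicity_mult_distrib prime_elem_multiplicity_power_distrib)
  hence "multiplicity p d' \<noteq> 0" using odd by presburger
  thus ?thesis by (rule contrapos_np) (rule not_dvd_imp_multiplicity_0)
qed

lemma exists_dvd_times_rat_square:
  fixes D :: int and r :: rat
  assumes "D \<noteq> 0" and "r \<noteq> 0" and "\<And>p. prime p \<Longrightarrow> odd (padic_val_rat p r) \<Longrightarrow> p dvd D"
  shows "\<exists>d'. d' dvd D \<and> (\<exists>q. of_int d' * r = q^2)"
proof -
  obtain n c where "n \<noteq> 0" "c \<noteq> 0" and nc: "r * c^2 = of_int n"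
    and odd: "\<And>p. prime p \<Longrightarrow> odd (padic_val_rat p r) \<longleftrightarrow> odd (multiplicity p n)"
    using rat_times_square_eq_int[OF assms(2)] by metis
  define d' where "d' = squarefree_part n"
  define t where "t = square_part n"
  have n: "n = d' * t^2" unfolding d'_def t_def by (rule squarefree_decompose)
  have "d' dvd D"
  proof (rule multiplicity_le_imp_dvd)
    show "d' \<noteq> 0" unfolding d'_def by simp
    fix p :: int assume "prime p"
    have "multiplicity p d' = multiplicity p n mod 2"
      unfolding d'_def using \<open>prime p\<close> by (rule prime_multiplicity_squarefree_part)
    moreover have "odd (multiplicity p n) \<Longrightarrow> multiplicity p D > 0"
      using assms(3) odd \<open>prime p\<close>
        prime_multiplicity_gt_zero_iff[OF prime_imp_prime_elem[OF \<open>prime p\<close>] assms(1)] by blast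
    ultimately show "multiplicity p d' \<le> multiplicity p D" by presburger
  qed
  moreover have "of_int d' * r = (of_int (d' * t) / c)^2"
    using nc \<open>c \<noteq> 0\<close> unfolding n by (simp add: field_simps power2_eq_square)
  ultimately show ?thesis by blast
qed

context squarefree_radicand
begin

lemma odd_padic_val_dvd_quad_disc:
  assumes "square_up_to_unit d (of_rat r)" and "r \<noteq> 0" and p: "prime p"
    and "odd (padic_val_rat p r)"
  shows "p dvd quad_disc d"
proof (rule ccontr)
  assume "\<not> p dvd quad_disc d"
  obtain n c where "n \<noteq> 0" and nc: "r * c^2 = of_int n" and "odd (multiplicity p n)"
    using rat_times_square_eq_int[OF assms(2)] p assms(4) by metis
  then obtain j where j: "multiplicity p n = Suc (2 * j)" by (metis oddE Suc_eq_plus1 add.commute)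
  obtain m where n: "n = p ^ multiplicity p n * m" and "\<not> p dvd m"
    using multiplicity_decompose'[of n p] \<open>n \<noteq> 0\<close> p not_prime_unit by blast
  have "p \<noteq> 0" using p by auto
  have "r * (c / of_int p ^ j)^2 * of_int p ^ (2 * j) = of_int n"
    using nc \<open>p \<noteq> 0\<close> by (simp add: field_simps power2_eq_square power_mult)
  also have "\<dots> = of_int p ^ (2 * j) * of_int (p * m)" by (subst n) (simp add: j)
  finally have "r * (c / of_int p ^ j)^2 = of_int (p * m)" using \<open>p \<noteq> 0\<close> by simp
  hence "square_up_to_unit d (of_int (p * m))"
    using square_up_to_unit_mult_rat_square[OF assms(1)] by (metis of_rat_of_int_eq)
  thus False using not_square_up_to_unit_unramified[OF p \<open>\<not> p dvd quad_disc d\<close> \<open>\<not> p dvd m\<close>] by blast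
qed

lemma square_up_to_unit_if_dvd_quad_disc_times_square:
  assumes "class_number_one d" and "d' dvd quad_disc d" and "of_int d' * r = q^2"
  shows "square_up_to_unit d (of_rat r)"
proof -
  have "d' \<noteq> 0" using assms(2) quad_disc_nonzero[OF squarefree] by auto
  hence "r = of_int d' * (q / of_int d')^2" using assms(3) by (simp add: field_simps power2_eq_square)
  moreover have "square_up_to_unit d (of_rat (of_int d'))"
    using square_up_to_unit_dvd_quad_disc[OF assms(1) \<open>d' \<noteq> 0\<close> assms(2)] by simp
  ultimately show ?thesis using square_up_to_unit_mult_rat_square by metis
qed

end

theorem lemma4p1:
  fixes d :: int and r :: rat
  assumes "squarefree d" and "d \<noteq> 1"
    and "class_number_one d"
    and "r \<noteq> 0"
  shows "((\<exists>e. quad_unit d e \<and> (\<exists>y\<in>quad_field d. e * of_rat r = y ^ 2))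
          \<longleftrightarrow> (\<forall>p::int. prime p \<and> odd (padic_val_rat p r) \<longrightarrow> p dvd quad_disc d))
       \<and> ((\<forall>p::int. prime p \<and> odd (padic_val_rat p r) \<longrightarrow> p dvd quad_disc d)
          \<longleftrightarrow> (\<exists>d'::int. d' dvd quad_disc d \<and> (\<exists>q::rat. of_int d' * r = q ^ 2)))"
proof -
  interpret squarefree_radicand d using assms(1,2) by unfold_locales
  have D: "quad_disc d \<noteq> 0" using quad_disc_nonzero[OF assms(1)] .
  have i_ii: "square_up_to_unit d (of_rat r) \<Longrightarrow> prime p \<and> odd (padic_val_rat p r)
      \<Longrightarrow> p dvd quad_disc d" for p
    using odd_padic_val_dvd_quad_disc[OF _ assms(4)] by blast
  have ii_iii: "(\<forall>p. prime p \<and> odd (padic_val_rat p r) \<longrightarrow> p dvd quad_disc d)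
      \<Longrightarrow> \<exists>d'. d' dvd quad_disc d \<and> (\<exists>q. of_int d' * r = q^2)"
    using exists_dvd_times_rat_square[OF D assms(4)] by blast
  have iii_ii: "d' dvd quad_disc d \<Longrightarrow> of_int d' * r = q^2 \<Longrightarrow> prime p \<and> odd (padic_val_rat p r)
      \<Longrightarrow> p dvd quad_disc d" for d' q p
    using prime_dvd_of_odd_padic_val[OF _ assms(4)] D by (metis dvd_0_left dvd_trans)
  have iii_i: "d' dvd quad_disc d \<Longrightarrow> of_int d' * r = q^2 \<Longrightarrow> square_up_to_unit d (of_rat r)" for d' q
    using square_up_to_unit_if_dvd_quad_disc_times_square[OF assms(3)] by blast
  show ?thesis unfolding square_up_to_unit_def[symmetric] using i_ii ii_iii iii_ii iii_i by blast
qed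

end
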